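(* For any partition $\lambda$ with 2-core $\bar\lambda$, the ratio $H_{\mathrm{odd}}(\lambda)/H(\bar\lambda)$ is an integer.
   Context: For a partition $\lambda$, the hook length of a box of its Young diagram is the number of boxes to its right in its row plus the number below it in its column plus one; $H(\lambda)$ is the product of all hook lengths and $H_{\mathrm{odd}}(\lambda)$ the product of the odd hook lengths. The 2-core $\bar\lambda$ is the partition obtained from $\lambda$ by repeatedly removing dominoes ($1\times2$ or $2\times1$ rectangles of boxes) from the Young diagram, such that a Young diagram remains after each removal, until no more removal is possible; it is independent of the choices made. *)

theory Defs
  imports Main
begin

definition is_partition :: "nat list \<Rightarrow> bool" where
  "is_partition lam \<longleftrightarrow> sorted_wrt (\<ge>) lam \<and> 0 \<notin> set lam"

text \<open>Young diagram: boxes (i,j) = (row, column), 0-indexed.\<close>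
definition diagram :: "nat list \<Rightarrow> (nat \<times> nat) set" where
  "diagram lam = {(i, j). i < length lam \<and> j < lam ! i}"

definition hook :: "nat list \<Rightarrow> nat \<times> nat \<Rightarrow> nat" where
  "hook lam b = (case b of (i, j) \<Rightarrow>
      card {k. j < k \<and> (i, k) \<in> diagram lam}
    + card {k. i < k \<and> (k, j) \<in> diagram lam} + 1)"

definition H :: "nat list \<Rightarrow> nat" where
  "H lam = (\<Prod>b\<in>diagram lam. hook lam b)"

definition H_odd :: "nat list \<Rightarrow> nat" where
  "H_odd lam = (\<Prod>b\<in>{b \<in> diagram lam. odd (hook lam b)}. hook lam b)"

definition domino_removal :: "nat list \<Rightarrow> nat list \<Rightarrow> bool" where
  "domino_removal lam mu \<longleftrightarrow> is_partition mu \<and> diagram mu \<subseteq> diagram lam \<and>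
     (\<exists>i j. diagram lam - diagram mu = {(i, j), (i, Suc j)}
          \<or> diagram lam - diagram mu = {(i, j), (Suc i, j)})"

definition is_two_core_of :: "nat list \<Rightarrow> nat list \<Rightarrow> bool" where
  "is_two_core_of mu lam \<longleftrightarrow> domino_removal\<^sup>*\<^sup>* lam mu \<and> \<not> (\<exists>nu. domino_removal mu nu)"

end

theory Submission
  imports Defs "HOL-Combinatorics.Permutations"
begin

text \<open>
  Colour the boxes like a checkerboard. A domino covers one box of each colour, so the signed
  count \<open>checker_sum\<close> of a diagram is invariant under domino removal. A diagram from which no
  domino can be removed is a staircase \<open>(k, k - 1, \<dots>, 1)\<close>; its hook lengths are all odd, the
  length \<open>2t + 1\<close> occurring \<open>k - t\<close> times, and \<open>k\<close> is determined by \<open>checker_sum\<close>.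

  For \<lambda> itself use the beta numbers \<open>\<lambda>\<^sub>i - i\<close>: for every gap \<open>x\<close> of the beta set below
  \<open>\<lambda>\<^sub>i - i\<close> (and above \<open>-length \<lambda>\<close>) row \<open>i\<close> has a hook of length \<open>\<lambda>\<^sub>i - i - x\<close>. Subtracting
  the odd number \<open>2t + 1\<close> swaps the parity classes of the beta set, whose imbalance is again
  given by \<open>checker_sum\<close>; so the larger class has at least \<open>k - t\<close> elements whose shift is a gap,
  i.e. \<lambda> has at least \<open>k - t\<close> hooks of length \<open>2t + 1\<close>. Comparing multiplicities of each hook
  length gives \<open>H \<mu> dvd H_odd \<lambda>\<close>.
\<close>

lemma prod_dvd_prod_if_card_fibres_le:
  assumes "finite A" "finite B" "\<And>v. card {a \<in> A. f a = v} \<le> card {b \<in> B. g b = v}"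
  shows "prod f A dvd prod g B"
  unfolding prod_unfold_prod_mset
  by (rule prod_mset_subset_imp_dvd) (simp add: subseteq_mset_def count_image_mset_eq_card_vimage assms)

lemma card_le_shift_gaps:
  fixes P :: "int set" and a h :: int
  assumes "finite P" "\<forall>x\<in>P. a < x" "\<And>x. Q x \<Longrightarrow> \<not> Q (x - h)"
  shows "card {x \<in> P. Q x} \<le> card {x \<in> P. Q x \<and> x - h \<notin> P \<and> a < x - h}
    + card {x \<in> P. \<not> Q x} + card {x. Q x \<and> a < x \<and> x \<le> a + h}"
proof -
  let ?G = "{x \<in> P. Q x \<and> x - h \<notin> P \<and> a < x - h}"
  let ?S = "{x \<in> P. Q x \<and> x - h \<in> P}"
  let ?I = "{x. Q x \<and> a < x \<and> x \<le> a + h}"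
  have fin: "finite ?G" "finite ?S" "finite ?I"
    using assms(1) finite_subset[of ?I "{a<..a + h}"] by auto
  have "card {x \<in> P. Q x} \<le> card (?G \<union> ?S \<union> ?I)"
    by (rule card_mono) (use fin assms(2) in force)+
  also have "\<dots> \<le> card ?G + card ?S + card ?I"
    by (meson add_le_mono card_Un_le le_refl order_trans)
  also have "card ?S \<le> card {x \<in> P. \<not> Q x}"
    by (rule card_inj_on_le[of "\<lambda>x. x - h"]) (use assms in \<open>auto simp: inj_on_def\<close>)
  finally show ?thesis by simp
qed

lemma card_odd_in_interval:
  "card {x::int. odd (x + p) \<and> a < x \<and> x \<le> a + (2 * int t + 1)} = t + of_bool (even (a + p))"
proof (induction t)
  case 0
  have "{x::int. odd (x + p) \<and> a < x \<and> x \<le> a + 1} = {x. odd (x + p) \<and> x \<in> {a + 1}}"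
    by auto
  also have "\<dots> = (if even (a + p) then {a + 1} else {})"
    by auto
  finally show ?case by simp
next
  case (Suc t)
  let ?b = "a + (2 * int t + 1)"
  have "{x::int. odd (x + p) \<and> a < x \<and> x \<le> a + (2 * int (Suc t) + 1)}
    = {x. odd (x + p) \<and> x \<in> {?b + 1, ?b + 2}} \<union> {x. odd (x + p) \<and> a < x \<and> x \<le> ?b}"
    by auto
  also have "{x. odd (x + p) \<and> x \<in> {?b + 1, ?b + 2}} = {if even (a + p) then ?b + 2 else ?b + 1}"
    by auto
  finally have "{x::int. odd (x + p) \<and> a < x \<and> x \<le> a + (2 * int (Suc t) + 1)}
    = insert (if even (a + p) then ?b + 2 else ?b + 1) {x. odd (x + p) \<and> a < x \<and> x \<le> ?b}"
    by simp
  moreover have "finite {x::int. odd (x + p) \<and> a < x \<and> x \<le> ?b}"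
    by (rule finite_subset[of _ "{a<..?b}"]) auto
  ultimately show ?case using Suc by simp
qed

lemma sorted_wrt_ge_nth_antimono:
  fixes l :: "'a::order list"
  shows "sorted_wrt (\<ge>) l \<Longrightarrow> i \<le> r \<Longrightarrow> r < length l \<Longrightarrow> l!r \<le> l!i"
  by (cases "i = r") (auto simp: sorted_wrt_iff_nth_less)

lemma sorted_wrt_list_update_antimono:
  fixes l :: "'a::order list"
  assumes "sorted_wrt (\<ge>) l" "i < length l" "v \<le> l!i" "Suc i < length l \<Longrightarrow> l!Suc i \<le> v"
  shows "sorted_wrt (\<ge>) (l[i := v])"
proof -
  note antimono = sorted_wrt_ge_nth_antimono[OF assms(1)]
  show ?thesis
    unfolding sorted_wrt_iff_nth_less
  proof (intro allI impI)
    fix a b assume "a < b" "b < length (l[i := v])"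
    then have "b < length l" by simp
    consider "a = i" | "b = i" | "a \<noteq> i" "b \<noteq> i"
      by blast
    then show "l[i := v]!b \<le> l[i := v]!a"
    proof cases
      case 1
      then show ?thesis
        using \<open>a < b\<close> \<open>b < length l\<close> assms(4) antimono[of "Suc i" b] by simp
    next
      case 2
      then show ?thesis
        using \<open>a < b\<close> \<open>b < length l\<close> assms(3) antimono[of a i] by simp
    qed (use \<open>a < b\<close> \<open>b < length l\<close> antimono[of a b] in simp)
  qed
qed

lemma diagram_Sigma: "diagram l = Sigma {..<length l} (\<lambda>i. {..<l!i})"
  by (auto simp: diagram_def)

lemma finite_diagram [simp]: "finite (diagram l)"
  by (simp add: diagram_Sigma)

lemma diagram_Nil [simp]: "diagram [] = {}"
  by (simp add: diagram_def)

lemma diagram_Cons: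
  "diagram (x # xs) = (\<lambda>j. (0, j)) ` {..<x} \<union> (\<lambda>(i, j). (Suc i, j)) ` diagram xs"
proof (rule set_eqI)
  fix b :: "nat \<times> nat"
  obtain i j where b: "b = (i, j)" by (cases b)
  show "b \<in> diagram (x # xs)
    \<longleftrightarrow> b \<in> (\<lambda>j. (0, j)) ` {..<x} \<union> (\<lambda>(i, j). (Suc i, j)) ` diagram xs"
    unfolding b by (cases i) (auto simp: diagram_def image_iff)
qed

lemma diagram_list_update:
  "i < length l \<Longrightarrow> v \<le> l!i \<Longrightarrow> diagram (l[i := v]) = diagram l - {i} \<times> {v..<l!i}"
  by (auto simp: diagram_def nth_list_update split: if_splits)

lemma diagram_filter_pos:
  "sorted_wrt (\<ge>) xs \<Longrightarrow> diagram (filter ((<) 0) xs) = diagram xs"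
proof (induction xs)
  case (Cons x xs)
  show ?case
  proof (cases "0 < x")
    case False
    with Cons.prems have "filter ((<) 0) xs = []"
      by (auto simp: filter_empty_conv)
    with Cons False show ?thesis
      by (simp add: diagram_Cons)
  qed (use Cons in \<open>simp add: diagram_Cons\<close>)
qed simp

lemma is_partition_nth_pos: "is_partition l \<Longrightarrow> i < length l \<Longrightarrow> 0 < l!i"
  by (metis gr0I is_partition_def nth_mem)

definition beta :: "nat list \<Rightarrow> nat \<Rightarrow> int" where
  "beta l i = int (l!i) - int i"

definition beta_set :: "nat list \<Rightarrow> int set" where
  "beta_set l = beta l ` {..<length l}"

lemma beta_add_le:
  "is_partition l \<Longrightarrow> r \<le> r' \<Longrightarrow> r' < length l \<Longrightarrow> beta l r' + int (r' - r) \<le> beta l r"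
  using sorted_wrt_ge_nth_antimono[of l r r'] by (simp add: beta_def is_partition_def)

lemma neg_length_less_beta: "i < length l \<Longrightarrow> - int (length l) < beta l i"
  by (simp add: beta_def)

lemma inj_on_beta: "is_partition l \<Longrightarrow> inj_on (beta l) {..<length l}"
proof (rule linorder_inj_onI')
  fix r r' assume "is_partition l" "r \<in> {..<length l}" "r' \<in> {..<length l}" "r < r'"
  then show "beta l r \<noteq> beta l r'"
    using beta_add_le[of l r r'] by simp
qed

lemma finite_beta_set [simp]: "finite (beta_set l)"
  by (simp add: beta_set_def)

lemma beta_threshold:
  assumes "is_partition l"
  obtains K where "K \<le> length l" "\<forall>r<length l. x < beta l r \<longleftrightarrow> r < K"
proof
  define K where "K = (LEAST r. length l \<le> r \<or> beta l r \<le> x)"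
  show KN: "K \<le> length l"
    unfolding K_def by (rule Least_le) simp
  have above: "r < length l \<and> x < beta l r" if "r < K" for r
    using not_less_Least[of r "\<lambda>r. length l \<le> r \<or> beta l r \<le> x"] that
    unfolding K_def by auto
  have "length l \<le> K \<or> beta l K \<le> x"
    unfolding K_def by (rule LeastI[of _ "length l"]) simp
  then have below: "beta l r \<le> x" if "K \<le> r" "r < length l" for r
    using beta_add_le[OF assms that] that by auto
  show "\<forall>r<length l. x < beta l r \<longleftrightarrow> r < K"
    using above below by (meson not_le)
qed

lemma hook_eq_beta_diff:
  assumes "i < K" "K \<le> length l" "\<forall>r<length l. j < l!r \<longleftrightarrow> r < K"
  shows "(i, j) \<in> diagram l \<and> hook l (i, j) = nat (beta l i - (int j + 1 - int K))"
proof -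
  have leg: "{k. i < k \<and> (k, j) \<in> diagram l} = {i<..<K}"
    using assms by (auto simp: diagram_def)
  have arm: "{k. j < k \<and> (i, k) \<in> diagram l} = {j<..<l!i}"
    using assms by (auto simp: diagram_def)
  have "hook l (i, j) = card {j<..<l!i} + card {i<..<K} + 1"
    by (simp add: hook_def leg arm)
  moreover have "j < l!i" "i < length l" using assms by auto
  ultimately show ?thesis
    using \<open>i < K\<close> by (simp add: diagram_def beta_def)
qed

lemma hook_of_beta_gap:
  assumes p: "is_partition l" and "i < length l" and gap: "x \<notin> beta_set l"
    and "x < beta l i" "- int (length l) < x"
  shows "\<exists>j. (i, j) \<in> diagram l \<and> hook l (i, j) = nat (beta l i - x)"
proof -
  obtain K where K: "K \<le> length l" "\<forall>r<length l. x < beta l r \<longleftrightarrow> r < K"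
    using beta_threshold[OF p] .
  have "i < K" using K assms by auto
  have below: "beta l r < x" if "K \<le> r" "r < length l" for r
    using K gap that by (force simp: beta_set_def)
  have "0 \<le> x + int K - 1"
  proof (cases "K = length l")
    case False
    then have "beta l K < x" using below K(1) by simp
    then show ?thesis using is_partition_nth_pos[OF p, of K] False K(1) by (simp add: beta_def)
  qed (use assms in simp)
  define j where "j = nat (x + int K - 1)"
  have "j < l!r \<longleftrightarrow> r < K" if r: "r < length l" for r
  proof
    assume "r < K"
    then have "beta l (K - 1) + int (K - 1 - r) \<le> beta l r" "x < beta l (K - 1)"
      using beta_add_le[OF p, of r "K - 1"] K by auto
    then show "j < l!r" using \<open>r < K\<close> \<open>0 \<le> x + int K - 1\<close>
      by (simp add: j_def beta_def)
  next
    assume "j < l!r"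
    show "r < K"
    proof (rule ccontr)
      assume "\<not> r < K"
      then have "beta l r + int (r - K) \<le> beta l K" "beta l K < x"
        using beta_add_le[OF p, of K r] below[of K] r by auto
      then show False using \<open>j < l!r\<close> \<open>\<not> r < K\<close> \<open>0 \<le> x + int K - 1\<close>
        by (simp add: j_def beta_def)
    qed
  qed
  then show ?thesis
    using hook_eq_beta_diff[OF \<open>i < K\<close> K(1), of j] \<open>0 \<le> x + int K - 1\<close>
    by (auto simp: j_def)
qed

lemma card_beta_gaps_le_card_hooks:
  assumes p: "is_partition l"
  shows "card {x \<in> beta_set l. x - int h \<notin> beta_set l \<and> - int (length l) < x - int h}
    \<le> card {b \<in> diagram l. hook l b = h}"
proof (rule surj_card_le)
  show "{x \<in> beta_set l. x - int h \<notin> beta_set l \<and> - int (length l) < x - int h}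
    \<subseteq> (\<lambda>b. beta l (fst b)) ` {b \<in> diagram l. hook l b = h}"
  proof
    fix x assume x: "x \<in> {x \<in> beta_set l. x - int h \<notin> beta_set l \<and> - int (length l) < x - int h}"
    then obtain i where i: "i < length l" "x = beta l i"
      by (auto simp: beta_set_def)
    with x have "x - int h < beta l i" by (cases "h = 0") auto
    with x i obtain j where "(i, j) \<in> diagram l" "hook l (i, j) = h"
      using hook_of_beta_gap[OF p i(1), of "x - int h"] by auto
    then show "x \<in> (\<lambda>b. beta l (fst b)) ` {b \<in> diagram l. hook l b = h}"
      using i by force
  qed
qed simp

definition checker_sum :: "nat list \<Rightarrow> int" where
  "checker_sum l = (\<Sum>(i, j)\<in>diagram l. (-1) ^ (i + j))"

lemma checker_sum_Nil [simp]: "checker_sum [] = 0"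
  by (simp add: checker_sum_def)

lemma sum_neg_one_power: "(\<Sum>j<n. (-1::int) ^ j) = of_bool (odd n)"
  by (induction n) auto

lemma checker_sum_Cons: "checker_sum (x # xs) = of_bool (odd x) - checker_sum xs"
proof -
  let ?f = "\<lambda>(i, j). (-1::int) ^ (i + j)"
  have row: "sum ?f ((\<lambda>j. (0, j)) ` {..<x}) = of_bool (odd x)"
    by (simp add: sum.reindex inj_on_def sum_neg_one_power)
  have rows_below: "sum ?f ((\<lambda>(i, j). (Suc i, j)) ` diagram xs) = - checker_sum xs"
    by (subst sum.reindex) (auto simp: inj_on_def checker_sum_def case_prod_beta sum_negf)
  have "checker_sum (x # xs) = sum ?f ((\<lambda>j. (0, j)) ` {..<x}) + sum ?f ((\<lambda>(i, j). (Suc i, j)) ` diagram xs)"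
    unfolding checker_sum_def diagram_Cons by (rule sum.union_disjoint) auto
  then show ?thesis
    using row rows_below by simp
qed

lemma checker_sum_domino_removal:
  assumes "domino_removal l m"
  shows "checker_sum m = checker_sum l"
proof -
  have "diagram m \<subseteq> diagram l"
    using assms by (simp add: domino_removal_def)
  then have "checker_sum l = (\<Sum>(i, j)\<in>diagram l - diagram m. (-1) ^ (i + j)) + checker_sum m"
    unfolding checker_sum_def by (rule sum.subset_diff) simp
  moreover obtain i j where "diagram l - diagram m = {(i, j), (i, Suc j)}
      \<or> diagram l - diagram m = {(i, j), (Suc i, j)}"
    using assms by (auto simp: domino_removal_def)
  then have "(\<Sum>(i, j)\<in>diagram l - diagram m. (-1::int) ^ (i + j)) = 0"
    by auto
  ultimately show ?thesis by simp
qed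

lemma checker_sum_rtranclp: "domino_removal\<^sup>*\<^sup>* l m \<Longrightarrow> checker_sum m = checker_sum l"
  by (induction rule: rtranclp_induct) (simp_all add: checker_sum_domino_removal)

lemma is_partition_rtranclp: "domino_removal\<^sup>*\<^sup>* l m \<Longrightarrow> is_partition l \<Longrightarrow> is_partition m"
  by (induction rule: rtranclp_induct) (auto simp: domino_removal_def)

lemma sum_beta_parity:
  "(\<Sum>i<length l. if odd (beta l i) then 1 else -1 :: int) = 2 * checker_sum l - of_bool (odd (length l))"
proof (induction l)
  case Nil
  then show ?case by simp
next
  case (Cons x xs)
  have "beta (x # xs) 0 = int x" "beta (x # xs) (Suc i) = beta xs i - 1" for i
    by (simp_all add: beta_def)
  then have "(\<Sum>i<length (x # xs). if odd (beta (x # xs) i) then 1 else -1 :: int)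
    = (if odd x then 1 else -1) - (\<Sum>i<length xs. if odd (beta xs i) then 1 else -1)"
    unfolding length_Cons sum.lessThan_Suc_shift by (auto simp: sum_negf[symmetric] intro!: sum.cong)
  then show ?case
    using Cons by (simp add: checker_sum_Cons)
qed

lemma card_odd_minus_card_even_beta_set:
  assumes "is_partition l"
  shows "int (card {x \<in> beta_set l. odd x}) - int (card {x \<in> beta_set l. even x})
    = 2 * checker_sum l - of_bool (odd (length l))"
proof -
  have card_class: "card {x \<in> beta_set l. Q x} = card {i \<in> {..<length l}. Q (beta l i)}" for Q
  proof -
    have "{x \<in> beta_set l. Q x} = beta l ` {i \<in> {..<length l}. Q (beta l i)}"
      by (auto simp: beta_set_def)
    moreover have "inj_on (beta l) {i \<in> {..<length l}. Q (beta l i)}"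
      by (rule inj_on_subset[OF inj_on_beta[OF assms]]) auto
    ultimately show ?thesis
      by (simp add: card_image)
  qed
  have "(\<Sum>i<length l. if odd (beta l i) then 1 else -1 :: int)
    = int (card {i \<in> {..<length l}. odd (beta l i)}) - int (card {i \<in> {..<length l}. even (beta l i)})"
    by (simp add: sum.If_cases Int_def)
  then show ?thesis
    using sum_beta_parity[of l] card_class by simp
qed

text \<open>The maximum is the size of the staircase 2-core of \<open>l\<close>, cf. \<open>checker_sum_staircase\<close>.\<close>

lemma card_hooks_odd_length_ge:
  assumes p: "is_partition l"
  shows "max (2 * checker_sum l - 1) (- 2 * checker_sum l) - int t
    \<le> int (card {b \<in> diagram l. hook l b = 2 * t + 1})"
proof -
  let ?P = "beta_set l" and ?N = "int (length l)" and ?h = "2 * int t + 1"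
  let ?hooks = "card {b \<in> diagram l. hook l b = 2 * t + 1}"
  have bound: "card {x \<in> ?P. Q x}
    \<le> ?hooks + card {x \<in> ?P. \<not> Q x} + card {x. Q x \<and> - ?N < x \<and> x \<le> - ?N + ?h}"
    if "\<And>x. Q x \<Longrightarrow> \<not> Q (x - ?h)" for Q
  proof -
    have "card {x \<in> ?P. Q x \<and> x - ?h \<notin> ?P \<and> - ?N < x - ?h}
      \<le> card {x \<in> ?P. x - ?h \<notin> ?P \<and> - ?N < x - ?h}"
      by (rule card_mono) auto
    also have "\<dots> \<le> ?hooks"
      using card_beta_gaps_le_card_hooks[OF p, of "2 * t + 1"] by (simp add: add.commute)
    moreover have "card {x \<in> ?P. Q x} \<le> card {x \<in> ?P. Q x \<and> x - ?h \<notin> ?P \<and> - ?N < x - ?h}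
      + card {x \<in> ?P. \<not> Q x} + card {x. Q x \<and> - ?N < x \<and> x \<le> - ?N + ?h}"
      by (rule card_le_shift_gaps) (use that neg_length_less_beta in \<open>auto simp: beta_set_def\<close>)
    ultimately show ?thesis by linarith
  qed
  have "card {x \<in> ?P. odd x} \<le> ?hooks + card {x \<in> ?P. even x} + t + of_bool (even (length l))"
  proof -
    have "card {x \<in> ?P. odd x} \<le> ?hooks + card {x \<in> ?P. \<not> odd x}
      + card {x. odd x \<and> - ?N < x \<and> x \<le> - ?N + ?h}"
      by (rule bound) simp
    then show ?thesis
      using card_odd_in_interval[of 0 "- ?N" t] by simp
  qed
  moreover have "card {x \<in> ?P. even x} \<le> ?hooks + card {x \<in> ?P. odd x} + t + of_bool (odd (length l))"
  proof -
    have "card {x \<in> ?P. even x} \<le> ?hooks + card {x \<in> ?P. \<not> even x}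
      + card {x. even x \<and> - ?N < x \<and> x \<le> - ?N + ?h}"
      by (rule bound) simp
    then show ?thesis
      using card_odd_in_interval[of 1 "- ?N" t] by simp
  qed
  ultimately show ?thesis
    using card_odd_minus_card_even_beta_set[OF p] by (cases "odd (length l)") simp_all
qed

definition staircase :: "nat \<Rightarrow> nat list" where
  "staircase k = map (\<lambda>i. k - i) [0..<k]"

lemma length_staircase [simp]: "length (staircase k) = k"
  by (simp add: staircase_def)

lemma nth_staircase [simp]: "i < k \<Longrightarrow> staircase k ! i = k - i"
  by (simp add: staircase_def)

lemma staircase_0 [simp]: "staircase 0 = []"
  by (simp add: staircase_def)

lemma staircase_Suc: "staircase (Suc k) = Suc k # staircase k"
  by (rule nth_equalityI) (auto simp: nth_Cons split: nat.split)

lemma diagram_staircase: "diagram (staircase k) = {(i, j). i + j < k}"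
  by (auto simp: diagram_def)

lemma hook_staircase: "i + j < k \<Longrightarrow> hook (staircase k) (i, j) = 2 * (k - i - j) - 1"
proof -
  assume "i + j < k"
  have "{q. j < q \<and> (i, q) \<in> diagram (staircase k)} = {j<..<k - i}"
    "{r. i < r \<and> (r, j) \<in> diagram (staircase k)} = {i<..<k - j}"
    by (auto simp: diagram_staircase)
  then show ?thesis
    using \<open>i + j < k\<close> by (simp add: hook_def)
qed

lemma odd_hook_staircase: "b \<in> diagram (staircase k) \<Longrightarrow> odd (hook (staircase k) b)"
  by (auto simp: diagram_staircase hook_staircase)

lemma card_hooks_staircase:
  "card {b \<in> diagram (staircase k). hook (staircase k) b = 2 * t + 1} = k - t"
proof -
  have "{b \<in> diagram (staircase k). hook (staircase k) b = 2 * t + 1}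
    = (\<lambda>i. (i, k - Suc t - i)) ` {..<k - t}"
    by (auto simp: diagram_staircase hook_staircase image_iff)
  also have "card \<dots> = k - t"
    by (simp add: card_image inj_on_def)
  finally show ?thesis .
qed

lemma checker_sum_staircase:
  "2 * checker_sum (staircase k) = (if odd k then int k + 1 else - int k)"
  by (induction k) (auto simp: staircase_Suc checker_sum_Cons)

lemma domino_removalI:
  assumes "sorted_wrt (\<ge>) xs" "diagram xs \<subseteq> diagram m"
    "diagram m - diagram xs = {(i, j), (i, Suc j)} \<or> diagram m - diagram xs = {(i, j), (Suc i, j)}"
  shows "domino_removal m (filter ((<) 0) xs)"
  using assms unfolding domino_removal_def is_partition_def diagram_filter_pos[OF assms(1)]
  by (auto simp: sorted_wrt_filter)

lemma domino_removal_horizontal: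
  assumes "is_partition m" "i < length m" "2 \<le> m!i"
    "Suc i < length m \<Longrightarrow> m!Suc i + 2 \<le> m!i"
  shows "\<exists>nu. domino_removal m nu"
proof -
  let ?xs = "m[i := m!i - 2]"
  have "sorted_wrt (\<ge>) ?xs"
    using assms by (intro sorted_wrt_list_update_antimono) (auto simp: is_partition_def)
  moreover have "diagram ?xs = diagram m - {(i, m!i - 2), (i, Suc (m!i - 2))}"
    using assms by (auto simp: diagram_list_update)
  moreover have "{(i, m!i - 2), (i, Suc (m!i - 2))} \<subseteq> diagram m"
    using assms by (auto simp: diagram_def)
  ultimately have "domino_removal m (filter ((<) 0) ?xs)"
    by (intro domino_removalI[where i = i and j = "m!i - 2"]) blast+
  then show ?thesis ..
qed

lemma domino_removal_vertical:
  assumes "is_partition m" "Suc i < length m" "m!Suc i = m!i"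
    "Suc (Suc i) < length m \<Longrightarrow> m!Suc (Suc i) < m!i"
  shows "\<exists>nu. domino_removal m nu"
proof -
  have "0 < m!i" using is_partition_nth_pos[OF assms(1), of i] assms(2) by simp
  \<comment> \<open>Lower row \<open>i + 1\<close> first, so that the intermediate list is still sorted.\<close>
  let ?ys = "m[Suc i := m!i - 1]"
  let ?xs = "?ys[i := m!i - 1]"
  have "sorted_wrt (\<ge>) ?ys"
    using assms by (intro sorted_wrt_list_update_antimono) (auto simp: is_partition_def)
  then have "sorted_wrt (\<ge>) ?xs"
    by (rule sorted_wrt_list_update_antimono) (use assms in auto)
  moreover have "diagram ?xs = diagram m - {(i, m!i - 1), (Suc i, m!i - 1)}"
    using assms \<open>0 < m!i\<close> by (auto simp: diagram_list_update)
  moreover have "{(i, m!i - 1), (Suc i, m!i - 1)} \<subseteq> diagram m"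
    using assms \<open>0 < m!i\<close> by (auto simp: diagram_def)
  ultimately have "domino_removal m (filter ((<) 0) ?xs)"
    by (intro domino_removalI[where i = i and j = "m!i - 1"]) blast+
  then show ?thesis ..
qed

lemma no_domino_removal_imp_staircase:
  assumes p: "is_partition m" and core: "\<not> (\<exists>nu. domino_removal m nu)"
  shows "m = staircase (length m)"
proof -
  let ?n = "length m"
  have "\<forall>r'. r \<le> r' \<longrightarrow> r' < ?n \<longrightarrow> m!r' = ?n - r'" if "r \<le> ?n" for r
    using that
  proof (induction rule: inc_induct)
    case (step r)
    have "m!r = ?n - r"
    proof (cases "Suc r = ?n")
      case True
      then show ?thesis
        using domino_removal_horizontal[OF p, of r] is_partition_nth_pos[OF p, of r] core by fastforce
    next
      case False
      then have next_row: "m!Suc r = ?n - Suc r" and "Suc r < ?n"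
        using step by auto
      have "m!Suc r \<le> m!r"
        using sorted_wrt_ge_nth_antimono[of m r "Suc r"] p \<open>Suc r < ?n\<close> by (simp add: is_partition_def)
      moreover have "m!Suc r \<noteq> m!r"
        using domino_removal_vertical[OF p \<open>Suc r < ?n\<close>] step core next_row by force
      moreover have "\<not> m!Suc r + 2 \<le> m!r"
        using domino_removal_horizontal[OF p, of r] core step by force
      ultimately show ?thesis
        using next_row \<open>Suc r < ?n\<close> by linarith
    qed
    then show ?case
      using step by (metis le_eq_less_or_eq Suc_le_eq)
  qed simp
  then show ?thesis
    by (intro nth_equalityI) auto
qed

lemma card_hooks_staircase_le_card_odd_hooks:
  assumes "is_partition l" "checker_sum l = checker_sum (staircase k)"
  shows "card {b \<in> diagram (staircase k). hook (staircase k) b = v}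
    \<le> card {b \<in> {b \<in> diagram l. odd (hook l b)}. hook l b = v}"
proof (cases "odd v")
  case True
  then obtain t where v: "v = 2 * t + 1"
    using oddE by blast
  have "max (2 * checker_sum l - 1) (- 2 * checker_sum l) = int k"
    using assms(2) checker_sum_staircase[of k] by auto
  then have "k - t \<le> card {b \<in> diagram l. hook l b = 2 * t + 1}"
    using card_hooks_odd_length_ge[OF assms(1), of t] by simp
  moreover have "{b \<in> {b \<in> diagram l. odd (hook l b)}. hook l b = v}
    = {b \<in> diagram l. hook l b = 2 * t + 1}"
    using v by auto
  ultimately show ?thesis
    using card_hooks_staircase[of k t] v by simp
next
  case False
  then have "{b \<in> diagram (staircase k). hook (staircase k) b = v} = {}"
    using odd_hook_staircase by fastforce
  then show ?thesis
    by (simp only: card.empty zero_le)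
qed

theorem corollary3p4:
  fixes lam mu :: "nat list"
  assumes "is_partition lam"
    and "is_two_core_of mu lam"
  shows "H mu dvd H_odd lam"
proof -
  from assms(2) have chain: "domino_removal\<^sup>*\<^sup>* lam mu" and core: "\<not> (\<exists>nu. domino_removal mu nu)"
    by (auto simp: is_two_core_of_def)
  have "mu = staircase (length mu)"
    using no_domino_removal_imp_staircase is_partition_rtranclp[OF chain assms(1)] core by blast
  then obtain k where mu: "mu = staircase k" ..
  have "checker_sum lam = checker_sum (staircase k)"
    using checker_sum_rtranclp[OF chain] mu by simp
  then have "card {b \<in> diagram mu. hook mu b = v}
    \<le> card {b \<in> {b \<in> diagram lam. odd (hook lam b)}. hook lam b = v}" for v
    unfolding mu by (rule card_hooks_staircase_le_card_odd_hooks[OF assms(1)])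
  then show ?thesis
    unfolding H_def H_odd_def by (rule prod_dvd_prod_if_card_fibres_le[rotated 2]) simp_all
qed

end
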